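(* Consider the following discrete-consumption investment problem for a homogeneous collective of $n$ individuals, with $n=1$ or $n=\infty$. Market: a risk-free asset with constant interest rate $r$ and a risky asset $\mathrm{d}S_t=S_t(\mu\,\mathrm{d}t+\sigma\,\mathrm{d}W_t)$, with $\sigma>0$. Trading is continuous; consumption occurs at the times $\mathcal T=\{0,\delta t,2\delta t,\dots,T\}$. Mortality: $s_t\in(0,1]$ is the probability of surviving from $t\in\mathcal T$ to $t+\delta t$, independently of $W$. Wealth: $X_t$ is the per-survivor fund value before consumption and $c_t$ the per-survivor consumption at $t\in\mathcal T$. After consumption the per-survivor wealth is $\overline X_t=s_t^{-C}(X_t-c_t)$, where $C=0$ if $n=1$ and $C=1$ if $n=\infty$. On $[t,t+\delta t)$ the wealth evolves as $\mathrm{d}\overline X_u=\overline X_u(a_u\mu+(1-a_u)r)\,\mathrm{d}u+\overline X_ua_u\sigma\,\mathrm{d}W_u$, and $X_{t+\delta t}$ is the left limit at $t+\delta t$. The initial wealth is $X_0=x_0>0$. Preferences: homogeneous Epstein--Zin utility with mortality, with $\alpha,\rho\in(-\infty,1)\setminus\{0\}$ and $\beta=1$. It is defined by $Z_t=0$ (if $\rho>0$) or $Z_t=\infty$ (if $\rho<0$) after death, and otherwise $Z_t=[c_t^\rho+\beta\,\mathbb E_t(Z_{t+\delta t}^\alpha)^{\rho/\alpha}]^{1/\rho}$, with the convention $\infty^a=0$ for $a<0$. Let $z_t$ be the optimal Epstein--Zin utility at time $t$ for unit per-survivor wealth. Set $$a^*=\frac{\mu-r}{(1-\alpha)\sigma^2},\quad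 \xi=a^*(\mu-r)+r-\tfrac12(a^* )^2(1-\alpha)\sigma^2,\quad \tilde\xi=a^*(\mu-r)+r-\tfrac12(a^* )^2\sigma^2,\quad \phi_t=\beta^{1/\rho}e^{\xi\,\delta t}s_t^{\frac1\alpha-C}.$$ Under the optimal strategy (proportion $a^*$ in the risky asset at all times, and consumption of the proportion $z_t^{\rho/(\rho-1)}$ of wealth at each $t\in\mathcal T$), the following hold. 1. The per-survivor fund value $X_t$ is log-normally distributed, $\log X_t\sim N(\mu^X_t,(\sigma^X_t)^2)$, with $\sigma^X_t=\sigma a^*\sqrt t$ and $$\mu^X_{t+\delta t}=\mu^X_t+\log(s_t^{-C})+\log\big(1-z_t^{\frac{\rho}{\rho-1}}\big)+\tilde\xi\,\delta t,\qquad \mu^X_0=\log x_0.$$ 2. The optimal per-survivor consumption satisfies $$\log c_t\sim N\Big(\tfrac{\rho}{\rho-1}\log z_t+\mu^X_t,\ (\sigma^X_t)^2\Big).$$ 3. The conditional mean of log consumption satisfies $$\mathbb E(\log c_{t+\delta t}\mid c_t)=\log c_t+\log(s_t^{-C})+\tfrac{\rho}{1-\rho}\log\phi_t+\tilde\xi\,\delta t.$$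
   Context: $\mathbb E_t$ denotes conditional expectation given the information at time $t$. The case $n=\infty$ denotes an infinitely large tontine-style collective, in which the wealth of the deceased is shared evenly among the survivors, so that survivors' wealth grows by the factor $s_t^{-1}$. *)

theory Defs
  imports "HOL-Probability.Probability"
begin

datatype collective = Single | Infinite

definition C_exp :: "collective \<Rightarrow> real" where
  "C_exp n = (case n of Single \<Rightarrow> 0 | Infinite \<Rightarrow> 1)"

definition brownian_motion :: "'a measure \<Rightarrow> (real \<Rightarrow> 'a \<Rightarrow> real) \<Rightarrow> bool" where
  "brownian_motion M W \<longleftrightarrow>
     prob_space M \<and>
     (\<forall>t\<ge>0. W t \<in> borel_measurable M) \<and>
     (AE \<omega> in M. W 0 \<omega> = 0) \<and>
     (AE \<omega> in M. continuous_on {0..} (\<lambda>t. W t \<omega>)) \<and>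
     (\<forall>s t. 0 \<le> s \<and> s < t \<longrightarrow>
        distributed M lborel (\<lambda>\<omega>. W t \<omega> - W s \<omega>) (normal_density 0 (sqrt (t - s)))) \<and>
     (\<forall>ts::real list. sorted_wrt (<) ts \<and> ts \<noteq> [] \<and> 0 \<le> hd ts \<longrightarrow>
        prob_space.indep_vars M (\<lambda>_. borel) (\<lambda>i \<omega>. W (ts ! Suc i) \<omega> - W (ts ! i) \<omega>)
          {..<length ts - 1})"

definition normal_law :: "'a measure \<Rightarrow> ('a \<Rightarrow> real) \<Rightarrow> real \<Rightarrow> real \<Rightarrow> bool" where
  "normal_law M Y m v \<longleftrightarrow>
     (v = 0 \<and> Y \<in> borel_measurable M \<and> (AE \<omega> in M. Y \<omega> = m)) \<or>
     (v > 0 \<and> distributed M lborel Y (normal_density m (sqrt v)))"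

text \<open>Optimal Epstein--Zin utility per unit per-survivor wealth, z at time j * dt, for
  horizon T = N * dt, obtained by backward recursion from z_T = 1:
  z_t^(rho/(1-rho)) = 1 + (phi_t z_(t+dt))^(rho/(1-rho)).
  The auxiliary function is indexed by the number m of remaining steps.\<close>
fun ez_z_aux :: "(nat \<Rightarrow> real) \<Rightarrow> real \<Rightarrow> nat \<Rightarrow> nat \<Rightarrow> real" where
  "ez_z_aux \<phi> \<rho> N 0 = 1"
| "ez_z_aux \<phi> \<rho> N (Suc m) =
     (1 + (\<phi> (N - Suc m) * ez_z_aux \<phi> \<rho> N m) powr (\<rho> / (1 - \<rho>))) powr ((1 - \<rho>) / \<rho>)"

definition ez_z :: "(nat \<Rightarrow> real) \<Rightarrow> real \<Rightarrow> nat \<Rightarrow> nat \<Rightarrow> real" where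
  "ez_z \<phi> \<rho> N j = ez_z_aux \<phi> \<rho> N (N - j)"

end

theory Submission imports Defs begin

text \<open>Under the constant proportion a, wealth is multiplied over each period by a deterministic
  factor times exp (a \<sigma> \<Delta>W), and consumption is a deterministic fraction of wealth. Hence log
  wealth and log consumption at time t are deterministic shifts of a \<sigma> (W t - W 0), which is
  normal with variance (a \<sigma>)^2 t. The backward recursion for z gives
  ln (1 - z_t^(\<rho>/(\<rho>-1))) = p ln \<phi>_t + p ln z_(t+dt) - p ln z_t with p = \<rho>/(1-\<rho>), so that
  ln c_(t+dt) - ln c_t is a constant plus a \<sigma> times the increment of W over [t, t+dt]. That
  increment is independent of W t - W 0, of which c_t is a function, so its conditional mean
  given c_t vanishes.\<close>

lemma brownian_motion_prob_space: "brownian_motion M W \<Longrightarrow> prob_space M"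
  unfolding brownian_motion_def by blast

lemma brownian_motion_measurable:
  "brownian_motion M W \<Longrightarrow> 0 \<le> t \<Longrightarrow> W t \<in> borel_measurable M"
  unfolding brownian_motion_def by blast

lemma brownian_motion_increment_distributed:
  "brownian_motion M W \<Longrightarrow> 0 \<le> s \<Longrightarrow> s < t \<Longrightarrow>
   distributed M lborel (\<lambda>\<omega>. W t \<omega> - W s \<omega>) (normal_density 0 (sqrt (t - s)))"
  unfolding brownian_motion_def by blast

lemma
  assumes "brownian_motion M W" "0 \<le> s" "s < t"
  shows brownian_motion_increment_integrable: "integrable M (\<lambda>\<omega>. W t \<omega> - W s \<omega>)"
    and integral_brownian_motion_increment: "(\<integral>\<omega>. W t \<omega> - W s \<omega> \<partial>M) = 0"
proof -
  interpret prob_space M using brownian_motion_prob_space[OF assms(1)] .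
  have distr: "distributed M lborel (\<lambda>\<omega>. W t \<omega> - W s \<omega>) (normal_density 0 (sqrt (t - s)))"
    using brownian_motion_increment_distributed[OF assms] .
  have sd: "sqrt (t - s) > 0" using assms by simp
  show "integrable M (\<lambda>\<omega>. W t \<omega> - W s \<omega>)"
    by (rule distributed_integrable_var[OF distr])
      (use integrable_normal_moment_nz_1[OF sd, of 0] in simp_all)
  show "(\<integral>\<omega>. W t \<omega> - W s \<omega> \<partial>M) = 0"
    using normal_distributed_expectation[OF sd distr] by simp
qed

lemma integrable_affine_brownian_motion:
  assumes "brownian_motion M W" "0 \<le> t"
  shows "integrable M (\<lambda>\<omega>. m + k * (W t \<omega> - W 0 \<omega>))"
proof -
  interpret prob_space M using brownian_motion_prob_space[OF assms(1)] .
  show ?thesis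
  proof (cases "t = 0")
    case False
    then show ?thesis
      using brownian_motion_increment_integrable[OF assms(1), of 0 t] assms(2) by simp
  qed simp
qed

lemma normal_law_affine_brownian_motion:
  assumes "brownian_motion M W" "0 \<le> t"
  shows "normal_law M (\<lambda>\<omega>. m + k * (W t \<omega> - W 0 \<omega>)) m ((k * sqrt t)^2)"
proof -
  interpret prob_space M using brownian_motion_prob_space[OF assms(1)] .
  have meas: "(\<lambda>\<omega>. m + k * (W t \<omega> - W 0 \<omega>)) \<in> borel_measurable M"
    using brownian_motion_measurable[OF assms(1)] assms(2) by measurable
  show ?thesis
  proof (cases "k = 0 \<or> t = 0")
    case True
    then show ?thesis unfolding normal_law_def using meas by auto
  next
    case False
    then have "k \<noteq> 0" "t > 0" using assms(2) by auto
    have "distributed M lborel (\<lambda>\<omega>. W t \<omega> - W 0 \<omega>) (normal_density 0 (sqrt t))"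
      using brownian_motion_increment_distributed[OF assms(1), of 0 t] \<open>t > 0\<close> by simp
    then have "distributed M lborel (\<lambda>\<omega>. m + k * (W t \<omega> - W 0 \<omega>))
        (normal_density (m + k * 0) (\<bar>k\<bar> * sqrt t))"
      by (rule normal_density_affine) (use \<open>k \<noteq> 0\<close> \<open>t > 0\<close> in auto)
    moreover have "sqrt ((k * sqrt t)^2) = \<bar>k\<bar> * sqrt t" using \<open>t > 0\<close> by (simp add: abs_mult)
    ultimately show ?thesis unfolding normal_law_def using \<open>k \<noteq> 0\<close> \<open>t > 0\<close> by auto
  qed
qed

lemma integral_bounded_past_mult_increment:
  assumes BM: "brownian_motion M W" and t: "0 \<le> t1" "t1 < t2"
    and g: "g \<in> borel_measurable borel" "\<And>x. \<bar>g x\<bar> \<le> B"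
  shows "(\<integral>\<omega>. g (W t1 \<omega> - W 0 \<omega>) * (W t2 \<omega> - W t1 \<omega>) \<partial>M) = 0"
proof -
  interpret prob_space M using brownian_motion_prob_space[OF BM] .
  note incr = brownian_motion_increment_integrable[OF BM t]
    integral_brownian_motion_increment[OF BM t]
  show ?thesis
  proof (cases "t1 = 0")
    case True
    then show ?thesis using incr by simp
  next
    case False
    define ts where "ts = [0, t1, t2]"
    define G where "G i = (if i = 0 then g else id)" for i :: nat
    have "sorted_wrt (<) ts \<and> ts \<noteq> [] \<and> 0 \<le> hd ts" unfolding ts_def using False t by auto
    then have "indep_vars (\<lambda>_. borel) (\<lambda>i \<omega>. W (ts ! Suc i) \<omega> - W (ts ! i) \<omega>) {..<length ts - 1}"
      using BM unfolding brownian_motion_def by blast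
    moreover have "length ts - 1 = 2" unfolding ts_def by simp
    ultimately have "indep_vars (\<lambda>_. borel) (\<lambda>i \<omega>. W (ts ! Suc i) \<omega> - W (ts ! i) \<omega>) {..<2}"
      by simp
    then have indep: "indep_vars (\<lambda>_. borel) (\<lambda>i \<omega>. G i (W (ts ! Suc i) \<omega> - W (ts ! i) \<omega>)) {..<2}"
      by (rule indep_vars_compose2) (auto simp: G_def g)
    have [measurable]: "W t1 \<in> borel_measurable M" "W 0 \<in> borel_measurable M"
      using brownian_motion_measurable[OF BM] t by auto
    have "integrable M (\<lambda>\<omega>. g (W t1 \<omega> - W 0 \<omega>))"
      by (rule integrable_const_bound[where B=B]) (use g in auto)
    then have "(\<integral>\<omega>. (\<Prod>i<2. G i (W (ts ! Suc i) \<omega> - W (ts ! i) \<omega>)) \<partial>M)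
        = (\<Prod>i<2. \<integral>\<omega>. G i (W (ts ! Suc i) \<omega> - W (ts ! i) \<omega>) \<partial>M)"
      using indep incr g(1)
      by (intro indep_vars_lebesgue_integral) (auto simp: ts_def G_def less_2_cases_iff)
    also have "\<dots> = 0" by (simp add: numeral_2_eq_2 lessThan_Suc ts_def G_def incr)
    finally show ?thesis by (simp add: numeral_2_eq_2 lessThan_Suc ts_def G_def mult.commute)
  qed
qed

lemma real_cond_exp_past_plus_increment:
  assumes BM: "brownian_motion M W" and t: "0 \<le> t1" "t1 < t2"
    and Y: "\<And>\<omega>. Y \<omega> = h (W t1 \<omega> - W 0 \<omega>)" "h \<in> borel_measurable borel"
    and g: "g \<in> borel_measurable borel" "integrable M (\<lambda>\<omega>. g (Y \<omega>))"
  shows "AE \<omega> in M. real_cond_exp M (vimage_algebra (space M) Y borel)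
           (\<lambda>\<omega>. g (Y \<omega>) + k * (W t2 \<omega> - W t1 \<omega>)) \<omega> = g (Y \<omega>)"
proof -
  interpret prob_space M using brownian_motion_prob_space[OF BM] .
  define F where "F = vimage_algebra (space M) Y borel"
  have [measurable]: "W t1 \<in> borel_measurable M" "W 0 \<in> borel_measurable M"
    using brownian_motion_measurable[OF BM] t by auto
  have Y_meas: "Y \<in> borel_measurable M"
    unfolding Y(1)[abs_def] using Y(2) by measurable
  interpret F: finite_measure_subalgebra M F
    by unfold_locales
      (use Y_meas in \<open>auto simp: subalgebra_def F_def sets_vimage_algebra2 measurable_sets\<close>)
  have incr: "integrable M (\<lambda>\<omega>. W t2 \<omega> - W t1 \<omega>)"
    using brownian_motion_increment_integrable[OF BM t] .
  have "Y \<in> measurable F borel" unfolding F_def by (rule measurable_vimage_algebra1) simp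
  then have gY_F: "(\<lambda>\<omega>. g (Y \<omega>)) \<in> borel_measurable F" using g(1) by measurable
  have "AE \<omega> in M. real_cond_exp M F (\<lambda>\<omega>. g (Y \<omega>) + k * (W t2 \<omega> - W t1 \<omega>)) \<omega> = g (Y \<omega>)"
  proof (rule F.real_cond_exp_charact[OF _ _ g(2) gY_F])
    show "integrable M (\<lambda>\<omega>. g (Y \<omega>) + k * (W t2 \<omega> - W t1 \<omega>))" using g(2) incr by simp
    fix A assume "A \<in> sets F"
    then obtain B where B: "B \<in> sets borel" "A = Y -` B \<inter> space M"
      unfolding F_def by (auto simp: sets_vimage_algebra2)
    have A: "A \<in> sets M" using B Y_meas by (simp add: measurable_sets)
    have "(\<integral>\<omega>. indicator A \<omega> * (W t2 \<omega> - W t1 \<omega>) \<partial>M)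
        = (\<integral>\<omega>. indicator B (h (W t1 \<omega> - W 0 \<omega>)) * (W t2 \<omega> - W t1 \<omega>) \<partial>M)"
      by (rule Bochner_Integration.integral_cong) (auto simp: B(2) Y(1) indicator_def)
    also have "\<dots> = 0"
      by (rule integral_bounded_past_mult_increment[OF BM t, where B=1])
        (use B(1) Y(2) in \<open>auto simp: indicator_def\<close>)
    finally have "(\<integral>\<omega>. indicator A \<omega> * (W t2 \<omega> - W t1 \<omega>) \<partial>M) = 0" .
    then show "(\<integral>\<omega>\<in>A. g (Y \<omega>) + k * (W t2 \<omega> - W t1 \<omega>) \<partial>M) = (\<integral>\<omega>\<in>A. g (Y \<omega>) \<partial>M)"
      using integrable_mult_indicator[OF A g(2)] integrable_mult_indicator[OF A incr]
      by (simp add: set_lebesgue_integral_def distrib_left mult.left_commute)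
  qed
  then show ?thesis unfolding F_def .
qed

lemma real_cond_exp_ln_brownian_step:
  assumes BM: "brownian_motion M W" and t: "0 \<le> t1" "t1 < t2"
    and Y: "\<And>\<omega>. Y \<omega> > 0" "\<And>\<omega>. ln (Y \<omega>) = m + k * (W t1 \<omega> - W 0 \<omega>)"
    and Y': "\<And>\<omega>. ln (Y' \<omega>) = m + d + k * (W t2 \<omega> - W 0 \<omega>)"
  shows "AE \<omega> in M. real_cond_exp M (vimage_algebra (space M) Y borel) (\<lambda>\<omega>. ln (Y' \<omega>)) \<omega>
           = ln (Y \<omega>) + d"
proof -
  have Y_eq: "Y \<omega> = exp (m + k * (W t1 \<omega> - W 0 \<omega>))" for \<omega>
    using Y by (metis exp_ln less_imp_le)
  have "(\<lambda>\<omega>. ln (Y \<omega>) + d) = (\<lambda>\<omega>. (m + d) + k * (W t1 \<omega> - W 0 \<omega>))"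
    using Y(2) by (simp add: fun_eq_iff)
  then have "integrable M (\<lambda>\<omega>. ln (Y \<omega>) + d)"
    using integrable_affine_brownian_motion[OF BM t(1)] by simp
  then have "AE \<omega> in M. real_cond_exp M (vimage_algebra (space M) Y borel)
      (\<lambda>\<omega>. (ln (Y \<omega>) + d) + k * (W t2 \<omega> - W t1 \<omega>)) \<omega> = ln (Y \<omega>) + d"
    by (intro real_cond_exp_past_plus_increment[OF BM t,
          where g = "\<lambda>y. ln y + d" and h = "\<lambda>y. exp (m + k * y)"] Y_eq) auto
  moreover have "(\<lambda>\<omega>. ln (Y' \<omega>)) = (\<lambda>\<omega>. (ln (Y \<omega>) + d) + k * (W t2 \<omega> - W t1 \<omega>))"
  proof
    fix \<omega>
    show "ln (Y' \<omega>) = (ln (Y \<omega>) + d) + k * (W t2 \<omega> - W t1 \<omega>)"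
      using Y(2)[of \<omega>] Y'[of \<omega>] by (simp add: right_diff_distrib)
  qed
  ultimately show ?thesis by simp
qed

lemma ez_z_aux_pos: "ez_z_aux \<phi> \<rho> N m > 0"
proof (induction m)
  case (Suc m)
  have "1 + (\<phi> (N - Suc m) * ez_z_aux \<phi> \<rho> N m) powr (\<rho> / (1 - \<rho>)) > 0"
    by (smt (verit) powr_ge_zero)
  then show ?case by simp
qed simp

lemma ez_z_pos: "ez_z \<phi> \<rho> N j > 0"
  unfolding ez_z_def by (rule ez_z_aux_pos)

lemma ez_z_step:
  "j < N \<Longrightarrow> ez_z \<phi> \<rho> N j =
     (1 + (\<phi> j * ez_z \<phi> \<rho> N (Suc j)) powr (\<rho> / (1 - \<rho>))) powr ((1 - \<rho>) / \<rho>)"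
proof -
  assume "j < N"
  then have "N - j = Suc (N - Suc j)" "N - Suc (N - Suc j) = j" by simp_all
  then show ?thesis unfolding ez_z_def by simp
qed

lemma ln_one_minus_ez_consumption_rate:
  assumes j: "j < N" and \<phi>: "\<phi> j > 0" and \<rho>: "\<rho> \<noteq> 0" "\<rho> \<noteq> 1"
  defines "z \<equiv> ez_z \<phi> \<rho> N" and "p \<equiv> \<rho> / (1 - \<rho>)"
  shows "z j powr (\<rho> / (\<rho> - 1)) < 1"
    and "ln (1 - z j powr (\<rho> / (\<rho> - 1))) = p * ln (\<phi> j) + p * ln (z (Suc j)) - p * ln (z j)"
proof -
  define u where "u = (\<phi> j * z (Suc j)) powr p"
  have p: "p \<noteq> 0" "\<rho> / (\<rho> - 1) = - p" "(1 - \<rho>) / \<rho> = 1 / p"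
    using \<rho> by (auto simp: p_def field_simps)
  have u: "u > 0" unfolding u_def using \<phi> ez_z_pos[of \<phi> \<rho> N "Suc j"] by (simp add: z_def)
  have zj: "z j = (1 + u) powr (1 / p)"
    using ez_z_step[OF j, of \<phi> \<rho>] unfolding z_def u_def p_def[symmetric] p(3) .
  have rate: "z j powr (\<rho> / (\<rho> - 1)) = 1 / (1 + u)"
    unfolding zj p(2) using u p(1) by (simp add: powr_powr powr_minus_divide)
  then show "z j powr (\<rho> / (\<rho> - 1)) < 1" using u by simp
  have "1 - z j powr (\<rho> / (\<rho> - 1)) = u / (1 + u)" unfolding rate using u by (simp add: field_simps)
  then have "ln (1 - z j powr (\<rho> / (\<rho> - 1))) = ln u - ln (1 + u)" using u by (simp add: ln_div)
  also have "ln u = p * ln (\<phi> j) + p * ln (z (Suc j))"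
    unfolding u_def using \<phi> ez_z_pos[of \<phi> \<rho> N "Suc j"]
    by (simp add: z_def ln_powr ln_mult distrib_left)
  also have "ln (1 + u) = p * ln (z j)" unfolding zj using u p(1) by (simp add: ln_powr)
  finally show "ln (1 - z j powr (\<rho> / (\<rho> - 1))) = p * ln (\<phi> j) + p * ln (z (Suc j)) - p * ln (z j)" .
qed

lemma ln_wealth_path:
  fixes X c :: "nat \<Rightarrow> 'a \<Rightarrow> real" and W :: "real \<Rightarrow> 'a \<Rightarrow> real"
  assumes X0: "X 0 \<omega> = x0" "x0 > 0" "muX 0 = ln x0"
    and c: "\<And>i. c i \<omega> = \<kappa> i * X i \<omega>"
    and step: "\<And>i. i < N \<Longrightarrow> X (Suc i) \<omega> = g i * (X i \<omega> - c i \<omega>) *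
        exp (m * dt + k * (W (real (Suc i) * dt) \<omega> - W (real i * dt) \<omega>))"
    and g: "\<And>i. i < N \<Longrightarrow> g i > 0" and \<kappa>: "\<And>i. i < N \<Longrightarrow> \<kappa> i < 1"
    and muX_step: "\<And>i. i < N \<Longrightarrow> muX (Suc i) = muX i + ln (g i) + ln (1 - \<kappa> i) + m * dt"
    and "j \<le> N"
  shows "X j \<omega> > 0 \<and> ln (X j \<omega>) = muX j + k * (W (real j * dt) \<omega> - W 0 \<omega>)"
  using \<open>j \<le> N\<close>
proof (induction j)
  case 0
  then show ?case using X0 by simp
next
  case (Suc i)
  then have i: "i < N" and IH: "X i \<omega> > 0" "ln (X i \<omega>) = muX i + k * (W (real i * dt) \<omega> - W 0 \<omega>)"
    by auto
  have X: "X (Suc i) \<omega> = g i * (X i \<omega> * (1 - \<kappa> i)) *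
      exp (m * dt + k * (W (real (Suc i) * dt) \<omega> - W (real i * dt) \<omega>))"
    using step[OF i] c[of i] by (simp add: algebra_simps)
  have pos: "g i > 0" "1 - \<kappa> i > 0" using g[OF i] \<kappa>[OF i] by auto
  have "ln (X (Suc i) \<omega>) = ln (g i) + (ln (X i \<omega>) + ln (1 - \<kappa> i)) +
      (m * dt + k * (W (real (Suc i) * dt) \<omega> - W (real i * dt) \<omega>))"
    unfolding X using pos IH(1) by (simp add: ln_mult)
  also have "\<dots> = muX (Suc i) + k * (W (real (Suc i) * dt) \<omega> - W 0 \<omega>)"
    unfolding muX_step[OF i] IH(2) by (simp add: algebra_simps)
  finally show ?case unfolding X using pos IH(1) by simp
qed

theorem theorem3:
  fixes M :: "'a measure" and W :: "real \<Rightarrow> 'a \<Rightarrow> real"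
    and n :: collective
    and r \<mu> \<sigma> \<alpha> \<rho> \<beta> dt x0 :: real and N :: nat
    and s :: "nat \<Rightarrow> real"
    and X c :: "nat \<Rightarrow> 'a \<Rightarrow> real"
    and muX :: "nat \<Rightarrow> real"
  defines "C \<equiv> C_exp n"
    and "a \<equiv> (\<mu> - r) / ((1 - \<alpha>) * \<sigma>^2)"
  defines "\<xi> \<equiv> a * (\<mu> - r) + r - 1/2 * a^2 * (1 - \<alpha>) * \<sigma>^2"
    and "\<xi>' \<equiv> a * (\<mu> - r) + r - 1/2 * a^2 * \<sigma>^2"
  defines "\<phi> \<equiv> (\<lambda>j. \<beta> powr (1 / \<rho>) * exp (\<xi> * dt) * s j powr (1 / \<alpha> - C))"
  defines "z \<equiv> ez_z \<phi> \<rho> N"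
  assumes BM: "brownian_motion M W"
    and sigma_pos: "\<sigma> > 0"
    and alpha: "\<alpha> < 1" "\<alpha> \<noteq> 0"
    and rho: "\<rho> < 1" "\<rho> \<noteq> 0"
    and beta: "\<beta> = 1"
    and dt_pos: "dt > 0"
    and surv: "\<And>j. 0 < s j \<and> s j \<le> 1"
    and x0_pos: "x0 > 0"
    and X0: "\<And>\<omega>. X 0 \<omega> = x0"
    and cons: "\<And>j \<omega>. c j \<omega> = z j powr (\<rho> / (\<rho> - 1)) * X j \<omega>"
    and wealth: "\<And>j \<omega>. j < N \<Longrightarrow> X (Suc j) \<omega> =
        s j powr (- C) * (X j \<omega> - c j \<omega>) *
        exp ((a * \<mu> + (1 - a) * r - 1/2 * a^2 * \<sigma>^2) * dt
             + a * \<sigma> * (W (real (Suc j) * dt) \<omega> - W (real j * dt) \<omega>))"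
    and muX0: "muX 0 = ln x0"
    and muX_step: "\<And>j. j < N \<Longrightarrow> muX (Suc j) =
        muX j + ln (s j powr (- C)) + ln (1 - z j powr (\<rho> / (\<rho> - 1))) + \<xi>' * dt"
  shows "(\<forall>j\<le>N. normal_law M (\<lambda>\<omega>. ln (X j \<omega>)) (muX j) ((\<sigma> * a * sqrt (real j * dt))^2))
       \<and> (\<forall>j\<le>N. normal_law M (\<lambda>\<omega>. ln (c j \<omega>))
              (\<rho> / (\<rho> - 1) * ln (z j) + muX j) ((\<sigma> * a * sqrt (real j * dt))^2))
       \<and> (\<forall>j<N. AE \<omega> in M.
              real_cond_exp M (vimage_algebra (space M) (c j) borel) (\<lambda>\<omega>. ln (c (Suc j) \<omega>)) \<omega>
              = ln (c j \<omega>) + ln (s j powr (- C)) + \<rho> / (1 - \<rho>) * ln (\<phi> j) + \<xi>' * dt)"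
proof -
  define p where "p = \<rho> / (1 - \<rho>)"
  define Lc where "Lc j = \<rho> / (\<rho> - 1) * ln (z j) + muX j" for j
  have s_pos: "s j > 0" "s j \<noteq> 0" for j using surv[of j] by auto
  have \<phi>_pos: "\<phi> j > 0" for j unfolding \<phi>_def beta using s_pos(1)[of j] by simp
  have "\<rho> \<noteq> 1" using rho(1) by simp
  have rate: "z j powr (\<rho> / (\<rho> - 1)) < 1"
      "ln (1 - z j powr (\<rho> / (\<rho> - 1))) = p * ln (\<phi> j) + p * ln (z (Suc j)) - p * ln (z j)"
    if "j < N" for j
    using ln_one_minus_ez_consumption_rate[OF that \<phi>_pos rho(2) \<open>\<rho> \<noteq> 1\<close>]
    unfolding z_def p_def by simp_all
  have drift: "a * \<mu> + (1 - a) * r - 1/2 * a^2 * \<sigma>^2 = \<xi>'"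
    unfolding \<xi>'_def by (simp add: algebra_simps)
  have lnX: "X j \<omega> > 0 \<and> ln (X j \<omega>) = muX j + a * \<sigma> * (W (real j * dt) \<omega> - W 0 \<omega>)"
    if "j \<le> N" for j \<omega>
    by (rule ln_wealth_path[where X = X and c = c and W = W and muX = muX, OF X0 x0_pos muX0 cons wealth])
      (use s_pos rate(1) muX_step drift that in auto)
  have lnc: "c j \<omega> > 0 \<and> ln (c j \<omega>) = Lc j + a * \<sigma> * (W (real j * dt) \<omega> - W 0 \<omega>)"
    if "j \<le> N" for j \<omega>
    using lnX[OF that, of \<omega>] ez_z_pos[of \<phi> \<rho> N j]
    unfolding cons Lc_def z_def by (simp add: ln_mult ln_powr)
  have t_nonneg: "0 \<le> real j * dt" for j using dt_pos by simp
  have "normal_law M (\<lambda>\<omega>. ln (X j \<omega>)) (muX j) ((a * \<sigma> * sqrt (real j * dt))^2)" if "j \<le> N" for j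
    using normal_law_affine_brownian_motion[OF BM t_nonneg] lnX[OF that] by simp
  moreover have "normal_law M (\<lambda>\<omega>. ln (c j \<omega>)) (Lc j) ((a * \<sigma> * sqrt (real j * dt))^2)"
    if "j \<le> N" for j
    using normal_law_affine_brownian_motion[OF BM t_nonneg] lnc[OF that] by simp
  moreover have "AE \<omega> in M.
      real_cond_exp M (vimage_algebra (space M) (c j) borel) (\<lambda>\<omega>. ln (c (Suc j) \<omega>)) \<omega>
      = ln (c j \<omega>) + (ln (s j powr (- C)) + p * ln (\<phi> j) + \<xi>' * dt)"
    if j: "j < N" for j
  proof (rule real_cond_exp_ln_brownian_step[OF BM t_nonneg])
    have "\<rho> / (\<rho> - 1) = - p" unfolding p_def by (metis minus_diff_eq minus_divide_right)
    then have "Lc (Suc j) = Lc j + (ln (s j powr (- C)) + p * ln (\<phi> j) + \<xi>' * dt)"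
      using rate(2)[OF j] muX_step[OF j] unfolding Lc_def by (simp add: algebra_simps)
    then show "ln (c (Suc j) \<omega>) = Lc j + (ln (s j powr (- C)) + p * ln (\<phi> j) + \<xi>' * dt) +
        a * \<sigma> * (W (real (Suc j) * dt) \<omega> - W 0 \<omega>)" for \<omega>
      using lnc[of "Suc j" \<omega>] j by simp
  qed (use lnc[of j] j dt_pos in auto)
  ultimately show ?thesis
    unfolding Lc_def p_def mult.commute[of \<sigma> a] by (simp only: add.assoc) blast
qed

end
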